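(* Let $\zeta:(0,\pi]\to\mathbb R^p$ be continuously differentiable with $\|\zeta(\lambda)\|\le K|\log\lambda|^\ell$ for some $\ell\ge1$ and $\|\partial\zeta(\lambda)/\partial\lambda\|\le K\lambda^{-1}|\log\lambda|^{\ell-1}$ for all $\lambda\in(0,\pi]$, where $K<\infty$. Then, as $T\to\infty$, $$\sup_{\lambda\in[0,\pi]}\Big\|\frac1{\tilde T}\sum_{j=1}^{[\tilde T\lambda/\pi]}\zeta(\lambda_j)-\frac1\pi\int_0^\lambda\zeta(x)\,dx\Big\|\le K'\frac{(\log\tilde T)^\ell}{\tilde T}$$ for some constant $K'<\infty$.
   Context: $T$ is a positive integer (sample size), $\tilde T=[T/2]$ (integer part), and $\lambda_j=2\pi j/T$ are the Fourier frequencies. *)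

theory Defs
  imports "HOL-Analysis.Analysis"
begin

text \<open>Real power of an absolute value with the mathematical convention 0 to the power 0 equals 1
  (Isabelle's powr has 0 powr 0 = 0).\<close>
definition abspow :: "real \<Rightarrow> real \<Rightarrow> real" where
  "abspow y a = (if y = 0 \<and> a = 0 then 1 else \<bar>y\<bar> powr a)"

end

theory Submission
  imports Defs "HOL-Real_Asymp.Real_Asymp"
begin

(* Write h = 2 pi / T, n = T div 2 and L = -ln h.  On [h, pi] we have |ln x| <= L, so there
   zeta = O(L^l) and zeta'(x) = O(L^(l-1) / x).  By the mean value inequality, replacing the
   integral of zeta over the grid cell [(j-1) h, j h], j >= 2, by h zeta(j h) costs
   O(h L^(l-1) / (j-1)), and the harmonic sum of these errors is O(h L^l).  The first cell and
   the leftover piece of length < 2 h are controlled by the size bound alone; near 0 this uses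
   that x (-ln x)^l has derivative at least (-ln x)^l / 2 for x <= exp (-2 l).  Finally,
   replacing h by pi / n costs another O(h L^l), and L <= ln n. *)

lemma abspow_le_powr:
  assumes "0 < L" "\<bar>y\<bar> \<le> L" "0 \<le> a"
  shows "abspow y a \<le> L powr a"
  using assms by (auto simp: abspow_def intro: powr_mono2)

lemma abs_ln_le_neg_ln:
  fixes h x :: real
  assumes "0 < h" "h \<le> x" "h * x \<le> 1"
  shows "\<bar>ln x\<bar> \<le> - ln h"
proof -
  have "x \<le> inverse h" using assms by (simp add: field_simps)
  then have "ln x \<le> - ln h" using assms by (simp add: ln_inverse[symmetric])
  moreover have "ln h \<le> ln x" using assms by simp
  ultimately show ?thesis by linarith
qed

(* The k = 0 term is inverse 0 = 0, and for n = 0 the right-hand side is 1 + ln 0 = 1. *)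
lemma sum_inverse_le_one_plus_ln: "(\<Sum>k<n. inverse (real k)) \<le> 1 + ln (real n)"
proof (cases n)
  case (Suc m)
  then have "(\<Sum>k<n. inverse (real k)) = harm m"
    unfolding Suc sum.lessThan_Suc_shift harm_altdef by simp
  also have "\<dots> \<le> harm n" using Suc by (simp add: harm_mono)
  also have "\<dots> \<le> 1 + ln (real n)"
    using euler_mascheroni_sequence_decreasing[of 1 n] Suc by (simp add: harm_def)
  finally show ?thesis .
qed simp

lemma sum_inverse_le_neg_ln:
  assumes "0 < h" "1 \<le> - ln h" "real N * h\<^sup>2 \<le> 1"
  shows "(\<Sum>k<N. inverse (real k)) \<le> 3 * - ln h"
proof -
  have "ln (real N) \<le> 2 * - ln h"
  proof (cases "N = 0")
    case False
    then have "real N \<le> inverse (h\<^sup>2)" using assms by (simp add: field_simps)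
    then have "ln (real N) \<le> ln (inverse (h\<^sup>2))" using False assms by (subst ln_le_cancel_iff) auto
    also have "ln (inverse (h\<^sup>2)) = 2 * - ln h" using assms by (simp add: ln_inverse ln_realpow)
    finally show ?thesis .
  next
    case True
    have "0 \<le> - ln h" using assms(2) by linarith
    with True show ?thesis by simp
  qed
  then show ?thesis using sum_inverse_le_one_plus_ln[of N] assms by linarith
qed

definition x_neg_ln_powr :: "real \<Rightarrow> real \<Rightarrow> real" where
  "x_neg_ln_powr l x = x * (- ln x) powr l"

lemma has_real_derivative_x_neg_ln_powr:
  assumes "0 < x" "x < 1"
  shows "(x_neg_ln_powr l has_real_derivative (- ln x) powr l - l * (- ln x) powr (l - 1)) (at x)"
  unfolding x_neg_ln_powr_def using assms
  by (auto intro!: derivative_eq_intros simp: field_simps)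

lemma neg_ln_powr_le_twice_deriv:
  fixes l x :: real
  assumes "0 < l" "0 < x" "x \<le> exp (- 2 * l)"
  shows "(- ln x) powr l \<le> 2 * ((- ln x) powr l - l * (- ln x) powr (l - 1))"
proof -
  have "ln x \<le> ln (exp (- 2 * l))" using assms by (subst ln_le_cancel_iff) auto
  then have "2 * l \<le> - ln x" by simp
  then have "2 * l * (- ln x) powr (l - 1) \<le> (- ln x) * (- ln x) powr (l - 1)"
    by (intro mult_right_mono) auto
  also have "\<dots> = (- ln x) powr l"
    using \<open>0 < l\<close> \<open>2 * l \<le> - ln x\<close> by (subst powr_mult_base) auto
  finally show ?thesis by simp
qed

lemma continuous_on_x_neg_ln_powr:
  assumes "b < 1"
  shows "continuous_on {0..b} (x_neg_ln_powr l)"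
proof (cases "0 < b")
  case True
  have lim0: "(x_neg_ln_powr l \<longlongrightarrow> x_neg_ln_powr l 0) (at_right 0)"
    unfolding x_neg_ln_powr_def by real_asymp
  have "continuous (at x within {0..b}) (x_neg_ln_powr l)" if "x \<in> {0..b}" for x
  proof (cases "x = 0")
    case True
    with lim0 \<open>0 < b\<close> show ?thesis by (simp add: continuous_within at_within_Icc_at_right)
  next
    case False
    with that assms have "isCont (x_neg_ln_powr l) x"
      by (intro DERIV_isCont[OF has_real_derivative_x_neg_ln_powr]) auto
    then show ?thesis by (rule continuous_at_imp_continuous_at_within)
  qed
  then show ?thesis by (simp add: continuous_on_eq_continuous_within)
next
  case False
  then show ?thesis by (cases "b = 0") auto
qed

lemma has_integral_x_neg_ln_powr:
  assumes "0 \<le> a" "a \<le> b" "b < 1"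
  shows "((\<lambda>x. (- ln x) powr l - l * (- ln x) powr (l - 1))
           has_integral x_neg_ln_powr l b - x_neg_ln_powr l a) {a..b}"
  using assms
  by (intro fundamental_theorem_of_calculus_interior continuous_on_x_neg_ln_powr
        continuous_on_subset[OF continuous_on_x_neg_ln_powr[of b]])
     (auto simp: has_real_derivative_iff_has_vector_derivative[symmetric]
           intro!: has_real_derivative_x_neg_ln_powr)

lemma x_neg_ln_powr_mono:
  assumes "0 < l" "0 \<le> a" "a \<le> b" "b \<le> exp (- 2 * l)"
  shows "x_neg_ln_powr l a \<le> x_neg_ln_powr l b"
proof (rule DERIV_nonneg_imp_increasing_open[OF \<open>a \<le> b\<close>])
  have "b < 1" using assms by (smt (verit) exp_less_one_iff mult_pos_pos)
  then show "continuous_on {a..b} (x_neg_ln_powr l)"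
    using assms by (intro continuous_on_subset[OF continuous_on_x_neg_ln_powr[of b]]) auto
  fix x assume "a < x" "x < b"
  then show "\<exists>y. (x_neg_ln_powr l has_real_derivative y) (at x) \<and> 0 \<le> y"
    using assms \<open>b < 1\<close> neg_ln_powr_le_twice_deriv[of l x]
    by (intro exI[of _ "(- ln x) powr l - l * (- ln x) powr (l - 1)"] conjI
          has_real_derivative_x_neg_ln_powr) (auto intro: order_trans[rotated])
qed

lemma integral_le_x_neg_ln_powr:
  fixes f :: "real \<Rightarrow> 'a::euclidean_space"
  assumes "0 < l" "0 \<le> C" "0 \<le> a" "a \<le> b" "b \<le> exp (- 2 * l)"
    and f_cont: "continuous_on {0<..b} f"
    and f_le: "\<And>x. x \<in> {0<..b} \<Longrightarrow> norm (f x) \<le> C * (- ln x) powr l"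
  shows "f integrable_on {a..b}" and "norm (integral {a..b} f) \<le> 2 * C * x_neg_ln_powr l b"
proof -
  define g where "g x = 2 * C * ((- ln x) powr l - l * (- ln x) powr (l - 1))" for x
  have "b < 1" using assms by (smt (verit) exp_less_one_iff mult_pos_pos)
  then have g_int: "(g has_integral 2 * C * (x_neg_ln_powr l b - x_neg_ln_powr l a)) {a<..<b}"
    unfolding g_def has_integral_Icc_iff_Ioo[symmetric]
    using assms by (intro has_integral_mult_right has_integral_x_neg_ln_powr) auto
  have f_le_g: "norm (f x) \<le> g x" if "x \<in> {a<..<b}" for x
  proof -
    have "norm (f x) \<le> C * (- ln x) powr l" using that assms by (intro f_le) auto
    also have "\<dots> \<le> C * (2 * ((- ln x) powr l - l * (- ln x) powr (l - 1)))"
      using that assms by (intro mult_left_mono neg_ln_powr_le_twice_deriv) auto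
    finally show ?thesis by (simp add: g_def algebra_simps)
  qed
  have Ioo_sets: "{a<..<b} \<in> sets lebesgue"
    by (rule fmeasurableD[OF lmeasurable_interval(2)])
  have "continuous_on {a<..<b} f"
    using assms by (auto intro: continuous_on_subset[OF f_cont])
  then have "f \<in> borel_measurable (lebesgue_on {a<..<b})"
    using Ioo_sets by (rule continuous_imp_measurable_on_sets_lebesgue)
  then have f_int: "f integrable_on {a<..<b}"
    using has_integral_integrable[OF g_int] f_le_g Ioo_sets
    by (rule measurable_bounded_by_integrable_imp_integrable)
  then show "f integrable_on {a..b}" by (simp add: integrable_on_open_interval_real)
  have "norm (integral {a..b} f) \<le> integral {a<..<b} g"
    unfolding integral_open_interval_real
    using f_int g_int f_le_g by (intro integral_norm_bound_integral) auto
  also have "\<dots> = 2 * C * (x_neg_ln_powr l b - x_neg_ln_powr l a)"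
    using g_int by (rule integral_unique)
  also have "\<dots> \<le> 2 * C * x_neg_ln_powr l b"
    using assms by (intro mult_left_mono) (auto simp: x_neg_ln_powr_def)
  finally show "norm (integral {a..b} f) \<le> 2 * C * x_neg_ln_powr l b" .
qed

lemma norm_scaleR_minus_integral_le:
  fixes f f' :: "real \<Rightarrow> 'a::banach"
  assumes "a \<le> b"
    and f_deriv: "\<And>x. x \<in> {a..b} \<Longrightarrow> (f has_vector_derivative f' x) (at x within {a..b})"
    and f'_le: "\<And>x. x \<in> {a..b} \<Longrightarrow> norm (f' x) \<le> B"
  shows "norm ((b - a) *\<^sub>R f b - integral {a..b} f) \<le> B * (b - a)\<^sup>2"
proof -
  have f_cont: "continuous_on {a..b} f"
    unfolding continuous_on_eq_continuous_within
    using has_vector_derivative_continuous[OF f_deriv] by blast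
  have "norm (f b - f x) \<le> B * (b - a)" if "x \<in> {a..b}" for x
  proof -
    have "norm (f b - f x) \<le> B * norm (b - x)"
    proof (rule differentiable_bound[where f' = "\<lambda>x t. t *\<^sub>R f' x"])
      show "(f has_derivative (\<lambda>t. t *\<^sub>R f' y)) (at y within {a..b})" if "y \<in> {a..b}" for y
        using f_deriv[OF that] by (simp add: has_vector_derivative_def)
      show "onorm (\<lambda>t. t *\<^sub>R f' y) \<le> B" if "y \<in> {a..b}" for y
        using f'_le[OF that] onorm_scaleR_left[OF bounded_linear_ident, of "f' y"]
        by (simp add: onorm_id)
    qed (use that assms in auto)
    also have "\<dots> \<le> B * (b - a)"
      using that order_trans[OF norm_ge_zero f'_le[of a]] assms by (intro mult_left_mono) auto
    finally show ?thesis .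
  qed
  then have "norm (integral {a..b} (\<lambda>x. f b - f x)) \<le> B * (b - a) * (b - a)"
    using assms by (intro integral_bound continuous_intros f_cont) auto
  moreover have "integral {a..b} (\<lambda>x. f b - f x) = (b - a) *\<^sub>R f b - integral {a..b} f"
    using assms integrable_continuous_real[OF f_cont] by (subst integral_diff) auto
  ultimately show ?thesis by (simp add: power2_eq_square mult.assoc)
qed

lemma integral_eq_sum_cells:
  fixes f :: "real \<Rightarrow> 'a::banach"
  assumes "0 \<le> h" "f integrable_on {0..real m * h}"
  shows "integral {0..real m * h} f = (\<Sum>j=1..m. integral {real (j - 1) * h..real j * h} f)"
  using assms(2)
proof (induction m)
  case (Suc m)
  have "real m * h \<le> real (Suc m) * h" using assms by (simp add: mult_right_mono)
  then have "integral {0..real (Suc m) * h} f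
      = integral {0..real m * h} f + integral {real m * h..real (Suc m) * h} f"
    using Suc.prems assms by (intro Henstock_Kurzweil_Integration.integral_combine[symmetric]) auto
  moreover have "f integrable_on {0..real m * h}"
    by (rule integrable_subinterval_real[OF Suc.prems])
       (use \<open>real m * h \<le> real (Suc m) * h\<close> in auto)
  ultimately show ?case using Suc.IH by simp
qed simp

lemma fourier_step_bounds:
  fixes T :: nat
  assumes "2 \<le> T"
  defines "n \<equiv> real (T div 2)" and "h \<equiv> 2 * pi / real T"
  shows "0 \<le> pi / n - h" and "(pi / n - h) * n \<le> h" and "- ln h \<le> ln n"
proof -
  have "1 \<le> T div 2" using assms by simp
  then have T: "2 * n \<le> real T" "real T \<le> 2 * n + 1" "1 \<le> n"
    unfolding n_def by linarith+
  then show "0 \<le> pi / n - h"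
    unfolding h_def by (simp add: field_simps)
  have "(pi / n - h) * n = pi * (real T - 2 * n) / real T"
    unfolding h_def using T by (simp add: field_simps)
  also have "\<dots> \<le> h"
    unfolding h_def using T by (intro divide_right_mono) auto
  finally show "(pi / n - h) * n \<le> h" .
  have "real T \<le> 3 * n" using T by linarith
  also have "\<dots> \<le> 2 * pi * n" using T pi_gt3 by (intro mult_right_mono) auto
  finally have "real T / (2 * pi) \<le> n" by (simp add: field_simps)
  moreover have "- ln h = ln (real T / (2 * pi))"
    unfolding h_def using T by (simp add: ln_inverse[symmetric])
  ultimately show "- ln h \<le> ln n"
    using T by simp
qed

lemma fourier_index_bounds:
  fixes T :: nat
  assumes "2 \<le> T" "0 \<le> lam" "lam \<le> pi"
  defines "n \<equiv> real (T div 2)" and "h \<equiv> 2 * pi / real T"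
    and "N \<equiv> nat \<lfloor>real (T div 2) * lam / pi\<rfloor>"
  shows "real N * h \<le> lam" and "lam - real N * h \<le> 2 * h" and "real N \<le> n"
proof -
  have "1 \<le> T div 2" using assms by simp
  then have T: "2 * n \<le> real T" "real T \<le> 2 * n + 1" "0 < n"
    unfolding n_def by linarith+
  have "0 \<le> n * lam / pi" using T assms(1-3) by simp
  then have "real N = of_int \<lfloor>n * lam / pi\<rfloor>" unfolding N_def n_def by simp
  then have N: "real N \<le> n * lam / pi" "n * lam / pi < real N + 1" by linarith+
  have "real N * h \<le> n * lam / pi * h"
    using N unfolding h_def by (intro mult_right_mono) auto
  also have "\<dots> = 2 * n * lam / real T"
    unfolding h_def by simp
  also have "\<dots> \<le> lam"
    using mult_right_mono[OF T(1) \<open>0 \<le> lam\<close>] T by (simp add: pos_divide_le_eq mult.commute)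
  finally show "real N * h \<le> lam" .
  have "lam - real N * h \<le> lam - (n * lam / pi - 1) * h"
    using N unfolding h_def by (intro diff_left_mono mult_right_mono) auto
  also have "\<dots> = (real T - 2 * n) * lam / real T + h"
    unfolding h_def using T by (simp add: field_simps)
  also have "\<dots> \<le> 1 * pi / real T + h"
    using T assms(1-3) by (intro add_right_mono divide_right_mono mult_mono) auto
  also have "\<dots> \<le> 2 * h"
    unfolding h_def by (simp add: divide_right_mono)
  finally show "lam - real N * h \<le> 2 * h" .
  have "n * lam / pi \<le> n"
    using T assms(1-3) by (simp add: field_simps mult_left_mono)
  with N show "real N \<le> n" by linarith
qed

locale log_singular =
  fixes \<zeta> \<zeta>' :: "real \<Rightarrow> 'p::euclidean_space" and K l :: real
  assumes zeta_deriv: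
      "\<And>x. x \<in> {0<..pi} \<Longrightarrow> (\<zeta> has_vector_derivative \<zeta>' x) (at x within {0<..pi})"
    and one_le_l: "1 \<le> l"
    and norm_le: "\<And>x. x \<in> {0<..pi} \<Longrightarrow> norm (\<zeta> x) \<le> K * abspow (ln x) l"
    and norm_deriv_le: "\<And>x. x \<in> {0<..pi} \<Longrightarrow> norm (\<zeta>' x) \<le> K * inverse x * abspow (ln x) (l - 1)"
begin

lemma K_nonneg: "0 \<le> K"
proof -
  have "0 < abspow (ln 2) l" by (simp add: abspow_def)
  moreover have "norm (\<zeta> 2) \<le> K * abspow (ln 2) l" using pi_gt3 by (intro norm_le) auto
  ultimately show ?thesis by (smt (verit) norm_ge_zero zero_le_mult_iff)
qed

lemma continuous_on_zeta: "continuous_on {0<..pi} \<zeta>"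
  unfolding continuous_on_eq_continuous_within
  using has_vector_derivative_continuous[OF zeta_deriv] by blast

lemma small_step_bounds:
  assumes "0 < h" "3 * h \<le> exp (- 2 * l)"
  shows "h * pi \<le> 1" and "1 \<le> - ln h"
proof -
  have "exp (- 2 * l) \<le> exp (- 2)" using one_le_l by simp
  also have "\<dots> \<le> 1 / 3"
    using exp_ge_add_one_self[of 2] by (simp add: exp_minus field_simps)
  finally have "h \<le> 1 / 9" using assms by simp
  then have "h * pi \<le> 1 / 9 * 4" using pi_less_4 assms by (intro mult_mono) auto
  then show "h * pi \<le> 1" by simp
  have "ln h \<le> ln (exp (- 2 * l))" using assms by (subst ln_le_cancel_iff) auto
  then show "1 \<le> - ln h" using one_le_l by simp
qed

lemma norm_zeta_le_neg_ln:
  assumes "0 < x" "x < 1"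
  shows "norm (\<zeta> x) \<le> K * (- ln x) powr l"
  using norm_le[of x] assms pi_gt3 by (simp add: abspow_def)

lemma integrable_zeta:
  assumes "0 \<le> a" "b \<le> pi"
  shows "\<zeta> integrable_on {a..b}"
proof -
  define c where "c = exp (- 2 * l)"
  have c: "0 < c" "c < 1" unfolding c_def using one_le_l by auto
  have "continuous_on {0<..c} \<zeta>"
    using c pi_gt3 by (intro continuous_on_subset[OF continuous_on_zeta]) auto
  moreover have "norm (\<zeta> x) \<le> K * (- ln x) powr l" if "x \<in> {0<..c}" for x
    using that c by (intro norm_zeta_le_neg_ln) auto
  ultimately have "\<zeta> integrable_on {0..c}"
    using c one_le_l K_nonneg unfolding c_def
    by (intro integral_le_x_neg_ln_powr(1)[where l = l and C = K]) auto
  moreover have "\<zeta> integrable_on {c..pi}"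
    using c by (intro integrable_continuous_interval continuous_on_subset[OF continuous_on_zeta]) auto
  ultimately have "\<zeta> integrable_on {0..pi}"
    using c pi_gt3 by (intro Henstock_Kurzweil_Integration.integrable_combine[of 0 c pi]) auto
  then show ?thesis by (rule integrable_subinterval_real) (use assms in auto)
qed

lemma norm_zeta_le:
  assumes "0 < h" "h * pi \<le> 1" "h \<le> x" "x \<le> pi"
  shows "norm (\<zeta> x) \<le> K * (- ln h) powr l"
    and "norm (\<zeta>' x) \<le> K / x * (- ln h) powr (l - 1)"
proof -
  have x: "x \<in> {0<..pi}" using assms by auto
  have "h < 1" using assms pi_gt3 by (smt (verit) mult_less_cancel_left1)
  then have L: "0 < - ln h" using assms by simp
  have "h * x \<le> 1" using assms by (smt (verit) mult_left_mono)
  then have "\<bar>ln x\<bar> \<le> - ln h" using assms by (intro abs_ln_le_neg_ln) auto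
  then have "abspow (ln x) l \<le> (- ln h) powr l" and "abspow (ln x) (l - 1) \<le> (- ln h) powr (l - 1)"
    using L one_le_l by (auto intro: abspow_le_powr)
  then show "norm (\<zeta> x) \<le> K * (- ln h) powr l"
    and "norm (\<zeta>' x) \<le> K / x * (- ln h) powr (l - 1)"
    using norm_le[OF x] norm_deriv_le[OF x] K_nonneg x
    by (auto simp: divide_inverse mult.assoc intro: order_trans[OF _ mult_left_mono])
qed

lemma norm_integral_short_le:
  assumes "0 < h" "3 * h \<le> exp (- 2 * l)" "0 \<le> a" "a \<le> b" "b \<le> pi" "b - a \<le> 2 * h"
  shows "norm (integral {a..b} \<zeta>) \<le> 6 * K * h * (- ln h) powr l"
proof (cases "h \<le> a")
  case True
  have "norm (integral {a..b} \<zeta>) \<le> K * (- ln h) powr l * (b - a)"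
    using assms True small_step_bounds[OF assms(1,2)]
    by (intro integral_bound continuous_on_subset[OF continuous_on_zeta] norm_zeta_le(1)) auto
  also have "\<dots> \<le> K * (- ln h) powr l * (6 * h)"
    using assms K_nonneg by (intro mult_left_mono) auto
  finally show ?thesis by (simp add: algebra_simps)
next
  case False
  have "b \<le> 3 * h" using False assms by linarith
  have "h * 3 < h * pi" using pi_gt3 assms(1) by simp
  then have "3 * h < 1" using small_step_bounds(1)[OF assms(1,2)] by linarith
  have "continuous_on {0<..b} \<zeta>"
    using assms by (intro continuous_on_subset[OF continuous_on_zeta]) auto
  moreover have "norm (\<zeta> x) \<le> K * (- ln x) powr l" if "x \<in> {0<..b}" for x
    using that \<open>b \<le> 3 * h\<close> \<open>3 * h < 1\<close> by (intro norm_zeta_le_neg_ln) auto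
  ultimately have "norm (integral {a..b} \<zeta>) \<le> 2 * K * x_neg_ln_powr l b"
    using assms \<open>b \<le> 3 * h\<close> one_le_l K_nonneg
    by (intro integral_le_x_neg_ln_powr(2)[where l = l and C = K]) auto
  also have "\<dots> \<le> 2 * K * x_neg_ln_powr l (3 * h)"
    using assms \<open>b \<le> 3 * h\<close> one_le_l K_nonneg
    by (intro mult_left_mono x_neg_ln_powr_mono) auto
  also have "\<dots> \<le> 2 * K * (3 * h * (- ln h) powr l)"
    using assms K_nonneg one_le_l \<open>3 * h < 1\<close> unfolding x_neg_ln_powr_def
    by (intro mult_left_mono powr_mono2) auto
  finally show ?thesis by (simp add: algebra_simps)
qed

lemma norm_first_cell_error_le:
  assumes "0 < h" "3 * h \<le> exp (- 2 * l)"
  shows "norm (h *\<^sub>R \<zeta> h - integral {0..h} \<zeta>) \<le> 7 * K * h * (- ln h) powr l"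
proof -
  have "h * pi \<le> 1" by (rule small_step_bounds(1)[OF assms])
  then have "h \<le> pi" using assms pi_gt3 by (smt (verit) mult_le_cancel_left1)
  have "norm (h *\<^sub>R \<zeta> h) \<le> h * (K * (- ln h) powr l)"
    using assms \<open>h * pi \<le> 1\<close> \<open>h \<le> pi\<close> by (auto intro: mult_left_mono norm_zeta_le(1))
  moreover have "norm (integral {0..h} \<zeta>) \<le> 6 * K * h * (- ln h) powr l"
    using assms \<open>h \<le> pi\<close> by (intro norm_integral_short_le) auto
  ultimately show ?thesis
    using norm_triangle_ineq4[of "h *\<^sub>R \<zeta> h" "integral {0..h} \<zeta>"] by (simp add: algebra_simps)
qed

lemma norm_cell_error_le:
  assumes "0 < h" "h * pi \<le> 1" "h \<le> a" "a + h \<le> pi"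
  shows "norm (h *\<^sub>R \<zeta> (a + h) - integral {a..a + h} \<zeta>)
    \<le> K / a * (- ln h) powr (l - 1) * h\<^sup>2"
proof -
  have "{a..a + h} \<subseteq> {0<..pi}" using assms by auto
  then have "norm (((a + h) - a) *\<^sub>R \<zeta> (a + h) - integral {a..a + h} \<zeta>)
      \<le> K / a * (- ln h) powr (l - 1) * ((a + h) - a)\<^sup>2"
  proof (intro norm_scaleR_minus_integral_le)
    fix x assume x: "x \<in> {a..a + h}"
    show "(\<zeta> has_vector_derivative \<zeta>' x) (at x within {a..a + h})"
      using x \<open>{a..a + h} \<subseteq> {0<..pi}\<close>
      by (blast intro: has_vector_derivative_within_subset zeta_deriv)
    have "norm (\<zeta>' x) \<le> K / x * (- ln h) powr (l - 1)"
      using x assms by (intro norm_zeta_le(2)) auto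
    also have "\<dots> \<le> K / a * (- ln h) powr (l - 1)"
      using x assms K_nonneg by (intro mult_right_mono divide_left_mono) auto
    finally show "norm (\<zeta>' x) \<le> K / a * (- ln h) powr (l - 1)" .
  qed (use assms in auto)
  then show ?thesis by simp
qed

(* For j = 1 the second summand vanishes, since inverse 0 = 0. *)
lemma norm_grid_cell_error_le:
  assumes "0 < h" "3 * h \<le> exp (- 2 * l)" "1 \<le> j" "real j * h \<le> pi"
  shows "norm (h *\<^sub>R \<zeta> (real j * h) - integral {real (j - 1) * h..real j * h} \<zeta>)
    \<le> (if j = 1 then 7 * K * h * (- ln h) powr l else 0)
        + K * h * (- ln h) powr (l - 1) * inverse (real (j - 1))"
proof (cases "j = 1")
  case True
  then show ?thesis using norm_first_cell_error_le[OF assms(1,2)] by simp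
next
  case False
  define a where "a = real (j - 1) * h"
  have "h \<le> a" "a + h = real j * h"
    using assms False by (auto simp: a_def algebra_simps)
  then have "norm (h *\<^sub>R \<zeta> (real j * h) - integral {a..real j * h} \<zeta>)
      \<le> K / a * (- ln h) powr (l - 1) * h\<^sup>2"
    using norm_cell_error_le[OF assms(1) small_step_bounds(1)[OF assms(1,2)], of a] assms by simp
  also have "\<dots> = K * h * (- ln h) powr (l - 1) * (h / a)"
    by (simp add: power2_eq_square)
  also have "h / a = inverse (real (j - 1))"
    unfolding a_def using assms(1) by (simp add: divide_inverse)
  finally show ?thesis using False by (simp add: a_def)
qed

lemma norm_grid_sum_minus_integral_le:
  assumes "0 < h" "3 * h \<le> exp (- 2 * l)" "real N * h \<le> pi"
  shows "norm (h *\<^sub>R (\<Sum>j=1..N. \<zeta> (real j * h)) - integral {0..real N * h} \<zeta>)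
    \<le> 10 * K * h * (- ln h) powr l"
proof -
  define L where "L = - ln h"
  have L: "1 \<le> L" "h * pi \<le> 1" using small_step_bounds[OF assms(1,2)] by (auto simp: L_def)
  have grid_le_pi: "real j * h \<le> pi" if "j \<le> N" for j
    using that assms by (intro order_trans[OF mult_right_mono assms(3)]) auto
  have "integral {0..real N * h} \<zeta> = (\<Sum>j=1..N. integral {real (j - 1) * h..real j * h} \<zeta>)"
    using assms by (intro integral_eq_sum_cells integrable_zeta) auto
  then have "norm (h *\<^sub>R (\<Sum>j=1..N. \<zeta> (real j * h)) - integral {0..real N * h} \<zeta>)
      \<le> (\<Sum>j=1..N. norm (h *\<^sub>R \<zeta> (real j * h) - integral {real (j - 1) * h..real j * h} \<zeta>))"
    by (simp add: scaleR_sum_right flip: sum_subtractf) (rule norm_sum)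
  also have "\<dots> \<le> (\<Sum>j=1..N. (if j = 1 then 7 * K * h * L powr l else 0)
                             + K * h * L powr (l - 1) * inverse (real (j - 1)))"
    unfolding L_def using assms grid_le_pi by (intro sum_mono norm_grid_cell_error_le) auto
  also have "\<dots> \<le> 7 * K * h * L powr l + K * h * L powr (l - 1) * (3 * L)"
  proof -
    have "h * (real N * h) \<le> h * pi" using assms by (intro mult_left_mono) auto
    then have "real N * h\<^sup>2 \<le> 1" using L by (simp add: power2_eq_square mult_ac)
    moreover have "(\<Sum>j=1..N. inverse (real (j - 1))) = (\<Sum>k<N. inverse (real k))"
      using sum.atLeast1_atMost_eq[of "\<lambda>j. inverse (real (j - 1))" N] by simp
    ultimately have "(\<Sum>j=1..N. inverse (real (j - 1))) \<le> 3 * L"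
      using sum_inverse_le_neg_ln[of h N] assms L unfolding L_def by simp
    then have "(\<Sum>j=1..N. K * h * L powr (l - 1) * inverse (real (j - 1)))
        \<le> K * h * L powr (l - 1) * (3 * L)"
      using K_nonneg assms(1) by (simp add: sum_distrib_left[symmetric] mult_left_mono)
    moreover have "(\<Sum>j=1..N. (if j = 1 then 7 * K * h * L powr l else 0))
        \<le> 7 * K * h * L powr l"
      using K_nonneg assms(1) by simp
    ultimately show ?thesis by (simp add: sum.distrib)
  qed
  also have "\<dots> = 10 * K * h * L powr l"
  proof -
    have "L * L powr (l - 1) = L powr l" using L by (subst powr_mult_base) auto
    then show ?thesis by (simp add: algebra_simps)
  qed
  finally show ?thesis by (simp add: L_def)
qed

lemma norm_grid_sum_le:
  assumes "0 < h" "h * pi \<le> 1" "real N * h \<le> pi"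
  shows "norm (\<Sum>j=1..N. \<zeta> (real j * h)) \<le> real N * (K * (- ln h) powr l)"
proof -
  have "norm (\<zeta> (real j * h)) \<le> K * (- ln h) powr l" if "j \<in> {1..N}" for j
  proof (rule norm_zeta_le(1)[OF assms(1,2)])
    show "h \<le> real j * h" using that assms by simp
    have "real j * h \<le> real N * h" using that assms by (intro mult_right_mono) auto
    then show "real j * h \<le> pi" using assms(3) by linarith
  qed
  then have "(\<Sum>j=1..N. norm (\<zeta> (real j * h))) \<le> real N * (K * (- ln h) powr l)"
    using sum_mono[of "{1..N}" "\<lambda>j. norm (\<zeta> (real j * h))" "\<lambda>_. K * (- ln h) powr l"] by simp
  then show ?thesis by (rule order_trans[OF norm_sum])
qed

lemma norm_riemann_sum_minus_integral_le:
  assumes "0 < h" "3 * h \<le> exp (- 2 * l)"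
    and "real N * h \<le> lam" "lam \<le> pi" "lam - real N * h \<le> 2 * h"
  shows "norm (h *\<^sub>R (\<Sum>j=1..N. \<zeta> (real j * h)) - integral {0..lam} \<zeta>)
    \<le> 16 * K * h * (- ln h) powr l"
proof -
  have "0 \<le> real N * h" using assms(1) by simp
  then have "integral {0..lam} \<zeta> = integral {0..real N * h} \<zeta> + integral {real N * h..lam} \<zeta>"
    using assms by (intro Henstock_Kurzweil_Integration.integral_combine[symmetric] integrable_zeta) auto
  moreover have "norm (h *\<^sub>R (\<Sum>j=1..N. \<zeta> (real j * h)) - integral {0..real N * h} \<zeta>)
      \<le> 10 * K * h * (- ln h) powr l"
    using assms by (intro norm_grid_sum_minus_integral_le) auto
  moreover have "norm (integral {real N * h..lam} \<zeta>) \<le> 6 * K * h * (- ln h) powr l"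
    using assms \<open>0 \<le> real N * h\<close> by (intro norm_integral_short_le) auto
  ultimately show ?thesis
    using norm_triangle_ineq4[of "h *\<^sub>R (\<Sum>j=1..N. \<zeta> (real j * h)) - integral {0..real N * h} \<zeta>"
        "integral {real N * h..lam} \<zeta>"]
    by (simp add: algebra_simps)
qed

lemma norm_fourier_sum_minus_integral_le:
  assumes "2 \<le> T" "6 * pi / real T \<le> exp (- 2 * l)" "0 \<le> lam" "lam \<le> pi"
  shows "norm ((1 / real (T div 2)) *\<^sub>R
                 (\<Sum>j=1..nat \<lfloor>real (T div 2) * lam / pi\<rfloor>. \<zeta> (2 * pi * real j / real T))
               - (1 / pi) *\<^sub>R integral {0..lam} \<zeta>)
         \<le> 17 * K * ln (real (T div 2)) powr l / real (T div 2)"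
proof -
  define n where "n = real (T div 2)"
  define h where "h = 2 * pi / real T"
  define N where "N = nat \<lfloor>real (T div 2) * lam / pi\<rfloor>"
  define S where "S = (\<Sum>j=1..N. \<zeta> (real j * h))"
  define I where "I = integral {0..lam} \<zeta>"
  define L where "L = - ln h"
  have h: "0 < h" "3 * h \<le> exp (- 2 * l)"
    using assms unfolding h_def by auto
  have "0 < n" using assms unfolding n_def by simp
  note step = fourier_step_bounds[OF assms(1), folded n_def h_def]
  note index = fourier_index_bounds[OF assms(1,3,4), folded n_def h_def N_def]
  have "norm S \<le> real N * (K * L powr l)"
    unfolding S_def L_def using index(1) assms(4) h
    by (intro norm_grid_sum_le small_step_bounds(1)) auto
  also have "\<dots> \<le> n * (K * L powr l)"
    using index(3) K_nonneg by (intro mult_right_mono) auto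
  finally have "(pi / n - h) * norm S \<le> (pi / n - h) * (n * (K * L powr l))"
    using step(1) by (rule mult_left_mono)
  also have "\<dots> = ((pi / n - h) * n) * (K * L powr l)"
    by simp
  also have "\<dots> \<le> h * (K * L powr l)"
    using step(2) K_nonneg by (intro mult_right_mono) auto
  finally have "norm ((pi / n - h) *\<^sub>R S) \<le> K * h * L powr l"
    using step(1) by (simp add: mult_ac)
  moreover have "norm (h *\<^sub>R S - I) \<le> 16 * K * h * L powr l"
    unfolding S_def I_def L_def by (intro norm_riemann_sum_minus_integral_le h index(1,2) assms(4))
  ultimately have "norm ((pi / n - h) *\<^sub>R S + (h *\<^sub>R S - I)) \<le> 17 * K * h * L powr l"
    using norm_triangle_ineq[of "(pi / n - h) *\<^sub>R S" "h *\<^sub>R S - I"] by linarith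
  moreover have "(1 / n) *\<^sub>R S - (1 / pi) *\<^sub>R I
      = (1 / pi) *\<^sub>R ((pi / n - h) *\<^sub>R S + (h *\<^sub>R S - I))"
    using \<open>0 < n\<close> by (simp add: scaleR_add_right scaleR_diff_right scaleR_diff_left)
  ultimately have "norm ((1 / n) *\<^sub>R S - (1 / pi) *\<^sub>R I) \<le> 17 * K * h * L powr l / pi"
    by (simp add: divide_right_mono)
  also have "\<dots> = 17 * K * L powr l * (h / pi)"
    by simp
  also have "\<dots> \<le> 17 * K * ln n powr l * (1 / n)"
  proof (rule mult_mono)
    have "0 \<le> L" "L \<le> ln n" using small_step_bounds(2)[OF h] step(3) unfolding L_def by auto
    then show "17 * K * L powr l \<le> 17 * K * ln n powr l"
      using K_nonneg one_le_l by (intro mult_left_mono powr_mono2) auto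
    show "h / pi \<le> 1 / n" using step(1) by (simp add: field_simps)
  qed (use K_nonneg h in auto)
  moreover have "(\<Sum>j=1..N. \<zeta> (2 * pi * real j / real T)) = S"
    unfolding S_def h_def by (intro sum.cong) (auto simp: mult_ac)
  ultimately show ?thesis
    unfolding n_def I_def N_def by simp
qed

end

theorem lemma1:
  fixes \<zeta> \<zeta>' :: "real \<Rightarrow> 'p::euclidean_space" and K l :: real
  assumes deriv: "\<And>x. x \<in> {0<..pi} \<Longrightarrow> (\<zeta> has_vector_derivative \<zeta>' x) (at x within {0<..pi})"
    and cont: "continuous_on {0<..pi} \<zeta>'"
    and l1: "l \<ge> 1"
    and bnd: "\<And>x. x \<in> {0<..pi} \<Longrightarrow> norm (\<zeta> x) \<le> K * abspow (ln x) l"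
    and dbnd: "\<And>x. x \<in> {0<..pi} \<Longrightarrow> norm (\<zeta>' x) \<le> K * inverse x * abspow (ln x) (l - 1)"
  shows "\<exists>K'. \<forall>\<^sub>F (T::nat) in sequentially.
           \<forall>lam\<in>{0..pi}.
             norm ((1 / real (T div 2)) *\<^sub>R
                     (\<Sum>j=1..nat \<lfloor>real (T div 2) * lam / pi\<rfloor>. \<zeta> (2 * pi * real j / real T))
                   - (1 / pi) *\<^sub>R integral {0..lam} \<zeta>)
             \<le> K' * ln (real (T div 2)) powr l / real (T div 2)"
proof -
  interpret log_singular \<zeta> \<zeta>' K l
    using deriv l1 bnd dbnd by unfold_locales
  have "((\<lambda>T. 6 * pi / real T) \<longlongrightarrow> 0) sequentially"
    by real_asymp
  then have "\<forall>\<^sub>F T in sequentially. 6 * pi / real T < exp (- 2 * l)"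
    by (rule order_tendstoD) simp
  moreover have "\<forall>\<^sub>F T in sequentially. 2 \<le> T"
    by (rule eventually_ge_at_top)
  ultimately have "\<forall>\<^sub>F T in sequentially. \<forall>lam\<in>{0..pi}.
      norm ((1 / real (T div 2)) *\<^sub>R
              (\<Sum>j=1..nat \<lfloor>real (T div 2) * lam / pi\<rfloor>. \<zeta> (2 * pi * real j / real T))
            - (1 / pi) *\<^sub>R integral {0..lam} \<zeta>)
      \<le> 17 * K * ln (real (T div 2)) powr l / real (T div 2)"
    by eventually_elim (intro ballI norm_fourier_sum_minus_integral_le, auto)
  then show ?thesis by blast
qed

end
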